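(* Let $\Gamma=(U\cup V,E)$ be a $3$-regular bipartite graph and let $\hat\Gamma$, $\eta$, $\eta'$, $\mathrm{sgn}$ and $\mu(F,f)$ be as described in the context. For any $2$-factor $F$ of $\Gamma$, any functions $f,g:F\to\{0,1\}$ and any perfect matchings $\mu_1\in\mu(F,f)$ and $\mu_2\in\mu(F,g)$, we have $\mathrm{sgn}(\mu_1)=\mathrm{sgn}(\mu_2)$.
   Context: Construction of $\hat\Gamma$: for each vertex $v$ of $\Gamma$ with neighbours $x,y,z$, there are four inner vertices $a_{v,S}$, one for each subset $S\subseteq\{x,y,z\}$ of even size (the set $I_v$), and six outer vertices $b_{v,u,0},b_{v,u,1}$ for $u\in\{x,y,z\}$ (the set $O_v$). Within the gadget, $a_{v,S}$ is adjacent to $b_{v,u,1}$ if $u\in S$ and to $b_{v,u,0}$ if $u\notin S$. For each edge $e=\{u,v\}\in E$ and $i\in\{0,1\}$ there is an edge $e_i$ joining $b_{v,u,i}$ and $b_{u,v,i}$. No other edges. Let $X=\bigcup_{v\in U}I_v\cup\bigcup_{v\in V}O_v$, $Y=\bigcup_{v\in V}I_v\cup\bigcup_{v\in U}O_v$, $n=|X|=|Y|=10|U|$, and fix bijections $\eta:X\to[n]$, $\eta':Y\to[n]$. A perfect matching is a bijection $\mu:X\to Y$ with $\mu(x)$ adjacent to $x$ for all $x$; $\mathrm{sgn}(\mu)$ is the sign of the permutation $\eta'\circ\mu\circ\eta^{-1}$ of $[n]$. A perfect matching $\mu$ is uniform if for every $e\in E$ at most one of $e_0,e_1$ is in $\mu$;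 then $F_\mu$ is the set of $e\in E$ with exactly one of $e_0,e_1$ in $\mu$, and $f_\mu(e)=i$ iff $e_i\in\mu$. A $2$-factor of $\Gamma$ is a set $F\subseteq E$ such that every vertex is incident to exactly two edges of $F$. $\mu(F,f)$ is the set of uniform perfect matchings $\mu$ with $F_\mu=F$ and $f_\mu=f$. *)

theory Defs
  imports "HOL-Combinatorics.Permutations"
begin

text \<open>Vertices of the blown-up graph: Inner v S is a_{v,S}; Outer v u i is b_{v,u,i}
  (the bit i is encoded as a bool: False = 0, True = 1).\<close>
datatype 'a hv = Inner 'a "'a set" | Outer 'a 'a bool

definition nbrs :: "('a \<Rightarrow> 'a \<Rightarrow> bool) \<Rightarrow> 'a \<Rightarrow> 'a set" where
  "nbrs adj v = {w. adj v w}"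

definition edges :: "('a \<Rightarrow> 'a \<Rightarrow> bool) \<Rightarrow> 'a set set" where
  "edges adj = {{u, v} | u v. adj u v}"

definition cubic_bipartite :: "'a set \<Rightarrow> 'a set \<Rightarrow> ('a \<Rightarrow> 'a \<Rightarrow> bool) \<Rightarrow> bool" where
  "cubic_bipartite U V adj \<longleftrightarrow> finite U \<and> finite V \<and> U \<inter> V = {} \<and>
     (\<forall>u v. adj u v \<longleftrightarrow> adj v u) \<and>
     (\<forall>u v. adj u v \<longrightarrow> (u \<in> U \<and> v \<in> V) \<or> (u \<in> V \<and> v \<in> U)) \<and>
     (\<forall>v \<in> U \<union> V. card (nbrs adj v) = 3)"

definition inner_set :: "('a \<Rightarrow> 'a \<Rightarrow> bool) \<Rightarrow> 'a \<Rightarrow> 'a hv set" where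
  "inner_set adj v = {Inner v S | S. S \<subseteq> nbrs adj v \<and> even (card S)}"

definition outer_set :: "('a \<Rightarrow> 'a \<Rightarrow> bool) \<Rightarrow> 'a \<Rightarrow> 'a hv set" where
  "outer_set adj v = {Outer v u i | u i. u \<in> nbrs adj v}"

fun hat_adj :: "('a \<Rightarrow> 'a \<Rightarrow> bool) \<Rightarrow> 'a hv \<Rightarrow> 'a hv \<Rightarrow> bool" where
  "hat_adj adj (Inner v S) (Outer w u i) =
     (w = v \<and> S \<subseteq> nbrs adj v \<and> even (card S) \<and> u \<in> nbrs adj v \<and> (i \<longleftrightarrow> u \<in> S))"
| "hat_adj adj (Outer w u i) (Inner v S) =
     (w = v \<and> S \<subseteq> nbrs adj v \<and> even (card S) \<and> u \<in> nbrs adj v \<and> (i \<longleftrightarrow> u \<in> S))"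
| "hat_adj adj (Outer v u i) (Outer u' v' j) = (u' = u \<and> v' = v \<and> j = i \<and> adj u v)"
| "hat_adj adj (Inner v S) (Inner w T) = False"

definition Xset :: "'a set \<Rightarrow> 'a set \<Rightarrow> ('a \<Rightarrow> 'a \<Rightarrow> bool) \<Rightarrow> 'a hv set" where
  "Xset U V adj = (\<Union>v\<in>U. inner_set adj v) \<union> (\<Union>v\<in>V. outer_set adj v)"

definition Yset :: "'a set \<Rightarrow> 'a set \<Rightarrow> ('a \<Rightarrow> 'a \<Rightarrow> bool) \<Rightarrow> 'a hv set" where
  "Yset U V adj = (\<Union>v\<in>V. inner_set adj v) \<union> (\<Union>v\<in>U. outer_set adj v)"

definition perfect_matching :: "'a set \<Rightarrow> 'a set \<Rightarrow> ('a \<Rightarrow> 'a \<Rightarrow> bool) \<Rightarrow> ('a hv \<Rightarrow> 'a hv) \<Rightarrow> bool" where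
  "perfect_matching U V adj \<mu> \<longleftrightarrow> bij_betw \<mu> (Xset U V adj) (Yset U V adj) \<and>
     (\<forall>x \<in> Xset U V adj. hat_adj adj x (\<mu> x))"

definition pm_sgn :: "'a set \<Rightarrow> 'a set \<Rightarrow> ('a \<Rightarrow> 'a \<Rightarrow> bool) \<Rightarrow> ('a hv \<Rightarrow> nat) \<Rightarrow> ('a hv \<Rightarrow> nat)
    \<Rightarrow> ('a hv \<Rightarrow> 'a hv) \<Rightarrow> int" where
  "pm_sgn U V adj \<eta> \<eta>' \<mu> =
     sign_on {1..10 * card U} (\<lambda>k. \<eta>' (\<mu> (inv_into (Xset U V adj) \<eta> k)))"

text \<open>The edge e_i (e = {u,v}, u in U, v in V) joins b_{v,u,i} (in X) and b_{u,v,i} (in Y);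
  it belongs to the matching mu iff mu maps b_{v,u,i} to b_{u,v,i}.\<close>
definition edge_used :: "'a set \<Rightarrow> 'a set \<Rightarrow> ('a hv \<Rightarrow> 'a hv) \<Rightarrow> 'a set \<Rightarrow> bool \<Rightarrow> bool" where
  "edge_used U V \<mu> e i \<longleftrightarrow>
     (\<exists>u v. e = {u, v} \<and> u \<in> U \<and> v \<in> V \<and> \<mu> (Outer v u i) = Outer u v i)"

definition uniform_pm :: "'a set \<Rightarrow> 'a set \<Rightarrow> ('a \<Rightarrow> 'a \<Rightarrow> bool) \<Rightarrow> ('a hv \<Rightarrow> 'a hv) \<Rightarrow> bool" where
  "uniform_pm U V adj \<mu> \<longleftrightarrow> perfect_matching U V adj \<mu> \<and>
     (\<forall>e \<in> edges adj. \<not> (edge_used U V \<mu> e False \<and> edge_used U V \<mu> e True))"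

definition F_mu :: "'a set \<Rightarrow> 'a set \<Rightarrow> ('a \<Rightarrow> 'a \<Rightarrow> bool) \<Rightarrow> ('a hv \<Rightarrow> 'a hv) \<Rightarrow> 'a set set" where
  "F_mu U V adj \<mu> = {e \<in> edges adj. edge_used U V \<mu> e False \<noteq> edge_used U V \<mu> e True}"

definition mu_Ff :: "'a set \<Rightarrow> 'a set \<Rightarrow> ('a \<Rightarrow> 'a \<Rightarrow> bool) \<Rightarrow> 'a set set \<Rightarrow> ('a set \<Rightarrow> bool)
    \<Rightarrow> ('a hv \<Rightarrow> 'a hv) set" where
  "mu_Ff U V adj F f = {\<mu>. uniform_pm U V adj \<mu> \<and> F_mu U V adj \<mu> = F \<and>
     (\<forall>e \<in> F. \<forall>i. edge_used U V \<mu> e i \<longleftrightarrow> i = f e)}"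

definition two_factor :: "'a set \<Rightarrow> 'a set \<Rightarrow> ('a \<Rightarrow> 'a \<Rightarrow> bool) \<Rightarrow> 'a set set \<Rightarrow> bool" where
  "two_factor U V adj F \<longleftrightarrow> F \<subseteq> edges adj \<and>
     (\<forall>v \<in> U \<union> V. card {e \<in> F. v \<in> e} = 2)"

end

theory Submission
  imports Defs "HOL-Combinatorics.Cycles"
begin

(*
  A matching in mu(F,f) uses the edge e_(f e) for every e in F and no other edge between
  gadgets. So in every gadget two outer vertices are taken by edges of F and the four inner
  vertices are matched to the remaining four outer vertices: one inner vertex is forced, and
  the other three together with the three free outer vertices form a hexagon, which has
  exactly two perfect matchings. Hence for two matchings mu1, mu2 with the same pattern f the
  permutation mu1^-1 o mu2 of X acts on each gadget as the identity or as a 3-cycle; it is even,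
  and sgn mu1 = sgn mu2. Changing f on one edge {u,v} is realised by composing a matching with
  a 5-cycle that reroutes it through the gadgets of u and v, again an even permutation.
  Induction on the number of edges where f and g differ finishes the proof.
*)

section \<open>Signs of permutations\<close>

lemma sign_eq_1_if_cube_id:
  assumes "permutation s" "s \<circ> s \<circ> s = id"
  shows "sign s = 1"
proof -
  have "sign (s \<circ> s \<circ> s) = sign s * sign s * sign s"
    using assms(1) by (simp add: sign_compose permutation_compose)
  also have "\<dots> = sign s"
    by (simp add: sign_def)
  finally show ?thesis
    using assms(2) by simp
qed

lemma sign_cycle_of_list:
  "distinct cs \<Longrightarrow> sign (cycle_of_list cs) = (-1) ^ (length cs - 1)"
proof (induction cs rule: cycle_of_list.induct)
  case (1 i j cs)
  have "sign (cycle_of_list (i # j # cs)) = sign (transpose i j) * sign (cycle_of_list (j # cs))"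
    unfolding cycle_of_list.simps by (rule sign_compose[OF permutation_swap_id permutation_of_cycle])
  also have "\<dots> = (-1) ^ (length (i # j # cs) - 1)"
    using 1 by (simp add: sign_swap_id)
  finally show ?case .
qed (auto simp: sign_id)

lemma sign_on_transfer_compose_permutes:
  assumes N: "finite N" and eta: "bij_betw \<eta> X N" and eta': "bij_betw \<eta>' Y N"
    and mu: "bij_betw \<mu> X Y" and tau: "\<tau> permutes X"
  shows "sign_on N (\<lambda>k. \<eta>' (\<mu> (\<tau> (inv_into X \<eta> k))))
    = sign_on N (\<lambda>k. \<eta>' (\<mu> (inv_into X \<eta> k))) * sign \<tau>"
proof -
  define \<pi> where "\<pi> = (\<lambda>k. \<eta>' (\<mu> (inv_into X \<eta> k)))"
  define \<rho> where "\<rho> = (\<lambda>k. \<eta> (\<tau> (inv_into X \<eta> k)))"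
  have inv: "bij_betw (inv_into X \<eta>) N X"
    using bij_betw_inv_into[OF eta] .
  have tau_bij: "bij_betw \<tau> X X"
    using permutes_imp_bij[OF tau] .
  have "bij_betw (\<eta>' \<circ> \<mu> \<circ> inv_into X \<eta>) N N"
    using bij_betw_trans[OF bij_betw_trans[OF inv mu] eta'] by (simp add: comp_assoc)
  then have pi: "bij_betw \<pi> N N"
    by (simp add: \<pi>_def o_def)
  have "bij_betw (\<eta> \<circ> \<tau> \<circ> inv_into X \<eta>) N N"
    using bij_betw_trans[OF bij_betw_trans[OF inv tau_bij] eta] by (simp add: comp_assoc)
  then have rho: "bij_betw \<rho> N N"
    by (simp add: \<rho>_def o_def)
  have "sign_on N (\<lambda>k. \<eta>' (\<mu> (\<tau> (inv_into X \<eta> k)))) = sign_on N (\<pi> \<circ> \<rho>)"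
  proof (rule sign_on_cong)
    fix k assume "k \<in> N"
    then have "\<tau> (inv_into X \<eta> k) \<in> X"
      using inv tau_bij by (meson bij_betwE)
    then have "inv_into X \<eta> (\<eta> (\<tau> (inv_into X \<eta> k))) = \<tau> (inv_into X \<eta> k)"
      using eta by (simp add: bij_betw_def inv_into_f_f)
    then show "\<eta>' (\<mu> (\<tau> (inv_into X \<eta> k))) = (\<pi> \<circ> \<rho>) k"
      by (simp add: \<pi>_def \<rho>_def)
  qed simp
  also have "\<dots> = sign_on N \<pi> * sign_on N \<rho>"
    by (rule sign_on_compose[OF pi rho N])
  also have "sign_on N \<rho> = sign \<tau>"
  proof -
    have "finite X"
      using bij_betw_finite[OF eta] N by simp
    have "sign_on N \<rho> = sign (map_permutation X \<eta> \<tau>)"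
      using eta by (simp add: sign_on_def map_permutation_def bij_betw_def \<rho>_def o_def)
    also have "\<dots> = sign \<tau>"
      using eta tau \<open>finite X\<close> by (intro sign_map_permutation) (auto simp: bij_betw_def)
    finally show ?thesis .
  qed
  finally show ?thesis
    by (simp add: \<pi>_def)
qed

lemma pm_sgn_compose_permutes:
  assumes "bij_betw \<eta> (Xset U V adj) {1..10 * card U}"
    and "bij_betw \<eta>' (Yset U V adj) {1..10 * card U}"
    and "bij_betw \<mu> (Xset U V adj) (Yset U V adj)"
    and tau: "\<tau> permutes Xset U V adj" and eq: "\<And>x. x \<in> Xset U V adj \<Longrightarrow> \<mu>' x = \<mu> (\<tau> x)"
  shows "pm_sgn U V adj \<eta> \<eta>' \<mu>' = pm_sgn U V adj \<eta> \<eta>' \<mu> * sign \<tau>"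
proof -
  have "inv_into (Xset U V adj) \<eta> k \<in> Xset U V adj" if "k \<in> {1..10 * card U}" for k
    using that assms(1) by (meson bij_betwE bij_betw_inv_into)
  then have "pm_sgn U V adj \<eta> \<eta>' \<mu>' =
      sign_on {1..10 * card U} (\<lambda>k. \<eta>' (\<mu> (\<tau> (inv_into (Xset U V adj) \<eta> k))))"
    unfolding pm_sgn_def using eq by (intro sign_on_cong) auto
  then show ?thesis
    using sign_on_transfer_compose_permutes[OF _ assms(1-3) tau] by (simp add: pm_sgn_def)
qed

section \<open>The local structure of a gadget\<close>

definition even_subsets :: "'a set \<Rightarrow> 'a set set" where
  "even_subsets A = {S. S \<subseteq> A \<and> even (card S)}"

text \<open>The even subsets of a three-element set {x,y,z} are parametrised by whether they contain
  x and whether they contain y.\<close>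
definition even_subset3 :: "'a \<Rightarrow> 'a \<Rightarrow> 'a \<Rightarrow> bool \<Rightarrow> bool \<Rightarrow> 'a set" where
  "even_subset3 x y z p q = {m. (m = x \<and> p) \<or> (m = y \<and> q) \<or> (m = z \<and> p \<noteq> q)}"

context
  fixes x y z :: 'a
  assumes distinct: "x \<noteq> y" "x \<noteq> z" "y \<noteq> z"
begin

lemma mem_even_subset3:
  "x \<in> even_subset3 x y z p q \<longleftrightarrow> p" "y \<in> even_subset3 x y z p q \<longleftrightarrow> q"
  "z \<in> even_subset3 x y z p q \<longleftrightarrow> p \<noteq> q"
  using distinct unfolding even_subset3_def by auto

lemma even_subset3_eq_iff:
  "even_subset3 x y z p q = even_subset3 x y z p' q' \<longleftrightarrow> p = p' \<and> q = q'"
  using mem_even_subset3(1,2)[of p q] mem_even_subset3(1,2)[of p' q'] by auto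

lemma even_subset3_in_even_subsets: "even_subset3 x y z p q \<in> even_subsets {x, y, z}"
proof -
  have "even_subset3 x y z p q = (if p \<and> q then {x, y} else if p then {x, z}
      else if q then {y, z} else {})"
    unfolding even_subset3_def by (cases p; cases q) auto
  then show ?thesis
    using distinct by (auto simp: even_subsets_def even_subset3_def)
qed

lemma even_subsets_eq_even_subset3:
  assumes "S \<in> even_subsets {x, y, z}"
  shows "S = even_subset3 x y z (x \<in> S) (y \<in> S)"
proof -
  have sub: "S \<subseteq> {x, y, z}" and ev: "even (card S)"
    using assms by (auto simp: even_subsets_def)
  have "z \<in> S \<longleftrightarrow> (x \<in> S) \<noteq> (y \<in> S)"
  proof (cases "x \<in> S"; cases "y \<in> S"; cases "z \<in> S")
    assume "x \<in> S" "y \<in> S" "z \<in> S"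
    then have "S = {x, y, z}" using sub by auto
    then show ?thesis using ev distinct by simp
  next
    assume "x \<in> S" "y \<notin> S" "z \<notin> S"
    then have "S = {x}" using sub by auto
    then show ?thesis using ev by simp
  next
    assume "x \<notin> S" "y \<in> S" "z \<notin> S"
    then have "S = {y}" using sub by auto
    then show ?thesis using ev by simp
  next
    assume "x \<notin> S" "y \<notin> S" "z \<in> S"
    then have "S = {z}" using sub by auto
    then show ?thesis using ev by simp
  qed auto
  then show ?thesis
    using sub unfolding even_subset3_def by auto
qed

end

text \<open>Write the inner vertex even_subset3 x y z p q as (p,q). Once out x True and out y True
  are taken, (True,True) is forced onto out z False, and the other three inner vertices and the
  three free outer vertices form a hexagon; these are its two perfect matchings.\<close>
definition gadget_matching_1 :: "('a \<Rightarrow> bool \<Rightarrow> 'b) \<Rightarrow> 'a \<Rightarrow> 'a \<Rightarrow> 'a \<Rightarrow> bool \<Rightarrow> bool \<Rightarrow> 'b" where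
  "gadget_matching_1 out x y z p q =
     (if p \<and> q then out z False else if q then out x False else if p then out z True
      else out y False)"

definition gadget_matching_2 :: "('a \<Rightarrow> bool \<Rightarrow> 'b) \<Rightarrow> 'a \<Rightarrow> 'a \<Rightarrow> 'a \<Rightarrow> bool \<Rightarrow> bool \<Rightarrow> 'b" where
  "gadget_matching_2 out x y z p q =
     (if p \<and> q then out z False else if q then out z True else if p then out y False
      else out x False)"

context
  fixes out :: "'a \<Rightarrow> bool \<Rightarrow> 'b" and x y z :: 'a
  assumes out_eq_iff: "\<And>m j m' j'. out m j = out m' j' \<longleftrightarrow> m = m' \<and> j = j'"
    and distinct: "x \<noteq> y" "x \<noteq> z" "y \<noteq> z"
begin

lemma gadget_matching_cases:
  fixes g :: "bool \<Rightarrow> bool \<Rightarrow> 'b"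
  assumes nbr: "\<And>p q. g p q \<in> {out x p, out y q, out z (p \<noteq> q)}"
    and inj: "\<And>p q p' q'. g p q = g p' q' \<Longrightarrow> p = p' \<and> q = q'"
    and avoid: "\<And>p q. g p q \<noteq> out x True" "\<And>p q. g p q \<noteq> out y True"
  shows "g = gadget_matching_1 out x y z \<or> g = gadget_matching_2 out x y z"
proof -
  note simps = out_eq_iff distinct distinct[symmetric]
  have TT: "g True True = out z False" using nbr[of True True] avoid by auto
  have FT: "g False True = out x False \<or> g False True = out z True"
    using nbr[of False True] avoid by auto
  have TF: "g True False = out y False \<or> g True False = out z True"
    using nbr[of True False] avoid by auto
  have FF: "g False False = out x False \<or> g False False = out y False"
    using nbr[of False False] inj[of False False True True] TT by (auto simp: simps)
  show ?thesis
    unfolding fun_eq_iff all_bool_eq gadget_matching_1_def gadget_matching_2_def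
    using TT FT TF FF inj[of False True True False] inj[of False True False False]
      inj[of True False False False]
    by (auto simp: simps)
qed

lemma gadget_matchings_cycle:
  fixes g1 g2 :: "bool \<Rightarrow> bool \<Rightarrow> 'b"
  assumes "g1 \<in> {gadget_matching_1 out x y z, gadget_matching_2 out x y z}"
    and "g2 \<in> {gadget_matching_1 out x y z, gadget_matching_2 out x y z}"
    and "g2 p0 q0 = g1 p1 q1" "g2 p1 q1 = g1 p2 q2"
  shows "g2 p2 q2 = g1 p0 q0"
  using assms distinct distinct[symmetric]
  unfolding gadget_matching_1_def gadget_matching_2_def
  by (cases p0; cases q0; cases p1; cases q1; cases p2; cases q2; auto simp: out_eq_iff)

lemma gadget_rematch:
  fixes g :: "bool \<Rightarrow> bool \<Rightarrow> 'b"
  assumes nbr: "\<And>p q. g p q \<in> {out x p, out y q, out z (p \<noteq> q)}"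
    and inj: "\<And>p q p' q'. g p q = g p' q' \<Longrightarrow> p = p' \<and> q = q'"
    and avoid: "\<And>p q. g p q \<noteq> out x True"
    and taken: "g p0 q0 = out x False"
  shows "\<exists>q. g True q = out y q0 \<or> g True q = out z (p0 \<noteq> q0)"
proof (rule ccontr)
  note simps = out_eq_iff distinct distinct[symmetric]
  assume "\<not> ?thesis"
  moreover have "\<not> p0"
    using nbr[of p0 q0] taken by (auto simp: simps)
  ultimately have "g True (\<not> q0) = out y (\<not> q0)" "g True q0 = out z (\<not> q0)"
    using nbr[of True "\<not> q0"] nbr[of True q0] avoid by (auto simp: simps)
  then show False
    using nbr[of False "\<not> q0"] inj[of False "\<not> q0" p0 q0] inj[of False "\<not> q0" True "\<not> q0"]
      inj[of False "\<not> q0" True q0] taken \<open>\<not> p0\<close> by (auto simp: simps)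
qed

end

text \<open>\<phi> S is the partner of the inner vertex a_{w,S} of a gadget with outer vertices
  out m j = b_{w,m,j}.\<close>
definition inner_matching :: "('a \<Rightarrow> bool \<Rightarrow> 'b) \<Rightarrow> 'a set \<Rightarrow> ('a set \<Rightarrow> 'b) \<Rightarrow> bool" where
  "inner_matching out N \<phi> \<longleftrightarrow> inj_on \<phi> (even_subsets N) \<and>
     (\<forall>S \<in> even_subsets N. \<exists>m \<in> N. \<phi> S = out m (m \<in> S))"

context
  fixes out :: "'a \<Rightarrow> bool \<Rightarrow> 'b" and x y z :: 'a
  assumes out_eq_iff: "\<And>m j m' j'. out m j = out m' j' \<longleftrightarrow> m = m' \<and> j = j'"
    and distinct: "x \<noteq> y" "x \<noteq> z" "y \<noteq> z"
begin

text \<open>Flipping the bits of the outer labels so that the outer vertices out x a and out y b carry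
  bit True reduces to the normalised lemmas above.\<close>
lemma inner_matching_relabel:
  fixes \<phi> :: "'a set \<Rightarrow> 'b" and a b :: bool
  assumes "inner_matching out {x, y, z} \<phi>"
    and out'_eq: "\<And>m r. out' m r = out m (r = (if m = x then a else if m = y then b else a = b))"
  shows "\<And>m j m' j'. out' m j = out' m' j' \<longleftrightarrow> m = m' \<and> j = j'"
    and "\<phi> (even_subset3 x y z (p = a) (q = b)) \<in> {out' x p, out' y q, out' z (p \<noteq> q)}"
    and "\<phi> (even_subset3 x y z (p = a) (q = b)) = \<phi> (even_subset3 x y z (p' = a) (q' = b))
      \<Longrightarrow> p = p' \<and> q = q'"
proof -
  show "out' m j = out' m' j' \<longleftrightarrow> m = m' \<and> j = j'" for m j m' j'
    by (auto simp: out'_eq out_eq_iff)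
  let ?S = "even_subset3 x y z (p = a) (q = b)"
  have S: "?S \<in> even_subsets {x, y, z}"
    using even_subset3_in_even_subsets[OF distinct] .
  then obtain m where "m \<in> {x, y, z}" "\<phi> ?S = out m (m \<in> ?S)"
    using assms(1) by (auto simp: inner_matching_def)
  then show "\<phi> ?S \<in> {out' x p, out' y q, out' z (p \<noteq> q)}"
    using distinct by (auto simp: out'_eq mem_even_subset3[OF distinct] out_eq_iff)
  assume "\<phi> ?S = \<phi> (even_subset3 x y z (p' = a) (q' = b))"
  then have "?S = even_subset3 x y z (p' = a) (q' = b)"
    using assms(1) S even_subset3_in_even_subsets[OF distinct]
    by (auto simp: inner_matching_def inj_on_def)
  then show "p = p' \<and> q = q'"
    by (auto simp: even_subset3_eq_iff[OF distinct])
qed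

lemma inner_matchings_cycle:
  assumes m1: "inner_matching out {x, y, z} \<phi>1" and m2: "inner_matching out {x, y, z} \<phi>2"
    and avoid1: "\<And>S. S \<in> even_subsets {x, y, z} \<Longrightarrow> \<phi>1 S \<noteq> out x a \<and> \<phi>1 S \<noteq> out y b"
    and avoid2: "\<And>S. S \<in> even_subsets {x, y, z} \<Longrightarrow> \<phi>2 S \<noteq> out x a \<and> \<phi>2 S \<noteq> out y b"
    and S: "S0 \<in> even_subsets {x, y, z}" "S1 \<in> even_subsets {x, y, z}" "S2 \<in> even_subsets {x, y, z}"
    and chain: "\<phi>2 S0 = \<phi>1 S1" "\<phi>2 S1 = \<phi>1 S2"
  shows "\<phi>2 S2 = \<phi>1 S0"
proof -
  define out' where "out' m r = out m (r = (if m = x then a else if m = y then b else a = b))"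
    for m r
  define g1 where "g1 p q = \<phi>1 (even_subset3 x y z (p = a) (q = b))" for p q
  define g2 where "g2 p q = \<phi>2 (even_subset3 x y z (p = a) (q = b))" for p q
  note relabel1 = inner_matching_relabel[OF m1 out'_def, folded g1_def]
  note relabel2 = inner_matching_relabel[OF m2 out'_def, folded g2_def]
  have E: "even_subset3 x y z p q \<in> even_subsets {x, y, z}" for p q
    using even_subset3_in_even_subsets[OF distinct] .
  have "g1 p q \<noteq> out' x True" "g1 p q \<noteq> out' y True" for p q
    using avoid1[OF E] distinct by (simp_all add: g1_def out'_def)
  then have "g1 \<in> {gadget_matching_1 out' x y z, gadget_matching_2 out' x y z}"
    using gadget_matching_cases[OF relabel1(1) distinct relabel1(2,3)] by simp
  moreover have "g2 p q \<noteq> out' x True" "g2 p q \<noteq> out' y True" for p q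
    using avoid2[OF E] distinct by (simp_all add: g2_def out'_def)
  then have "g2 \<in> {gadget_matching_1 out' x y z, gadget_matching_2 out' x y z}"
    using gadget_matching_cases[OF relabel2(1) distinct relabel2(2,3)] by simp
  moreover have "\<phi>1 S = g1 ((x \<in> S) = a) ((y \<in> S) = b)" "\<phi>2 S = g2 ((x \<in> S) = a) ((y \<in> S) = b)"
    if "S \<in> even_subsets {x, y, z}" for S
  proof -
    have cancel: "((A = c) = c) = A" for A c :: bool
      by auto
    have "even_subset3 x y z (x \<in> S) (y \<in> S) = S"
      using even_subsets_eq_even_subset3[OF distinct that] by (rule sym)
    then show "\<phi>1 S = g1 ((x \<in> S) = a) ((y \<in> S) = b)" "\<phi>2 S = g2 ((x \<in> S) = a) ((y \<in> S) = b)"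
      unfolding g1_def g2_def cancel by simp_all
  qed
  ultimately show ?thesis
    using gadget_matchings_cycle[OF relabel1(1) distinct, of g1 g2 "(x \<in> S0) = a" "(y \<in> S0) = b"
        "(x \<in> S1) = a" "(y \<in> S1) = b" "(x \<in> S2) = a" "(y \<in> S2) = b"] chain S
    by simp
qed

text \<open>If out x i is blocked and T sits on out x (\<not> i), some T' with x-bit i sits on an outer
  vertex adjacent to T, so the partners of T and T' can be exchanged along a cycle.\<close>
lemma inner_matching_rematch:
  assumes m: "inner_matching out {x, y, z} \<phi>"
    and avoid: "\<And>S. S \<in> even_subsets {x, y, z} \<Longrightarrow> \<phi> S \<noteq> out x i"
    and T: "T \<in> even_subsets {x, y, z}" "\<phi> T = out x (\<not> i)"
  shows "\<exists>T' \<in> even_subsets {x, y, z}. (x \<in> T' \<longleftrightarrow> i) \<and> (\<exists>m \<in> {x, y, z}. \<phi> T' = out m (m \<in> T))"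
proof -
  define out' where "out' m r = out m (r = (if m = x then i else if m = y then True else i = True))"
    for m r
  define g where "g p q = \<phi> (even_subset3 x y z (p = i) (q = True))" for p q
  note relabel = inner_matching_relabel[OF m out'_def, folded g_def]
  have E: "even_subset3 x y z p q \<in> even_subsets {x, y, z}" for p q
    using even_subset3_in_even_subsets[OF distinct] .
  have T_eq: "T = even_subset3 x y z (x \<in> T) (y \<in> T)"
    using even_subsets_eq_even_subset3[OF distinct T(1)] .
  have zT: "z \<in> T \<longleftrightarrow> (x \<in> T) \<noteq> (y \<in> T)"
    by (subst T_eq) (simp add: mem_even_subset3[OF distinct])
  have cancel: "(((x \<in> T) = i) = i) = (x \<in> T)"
    by auto
  have "g ((x \<in> T) = i) (y \<in> T) = out' x False"
    using T(2) T_eq[symmetric] unfolding g_def cancel by (simp add: out'_def)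
  moreover have "g p q \<noteq> out' x True" for p q
    using avoid[OF E] by (simp add: g_def out'_def)
  ultimately obtain q where
    "g True q = out' y (y \<in> T) \<or> g True q = out' z (((x \<in> T) = i) \<noteq> (y \<in> T))"
    using gadget_rematch[OF relabel(1) distinct relabel(2,3)] by blast
  then show ?thesis
    using E mem_even_subset3[OF distinct] zT distinct
    by (intro bexI[of _ "even_subset3 x y z i q"]) (auto simp: g_def out'_def out_eq_iff)
qed

end

section \<open>The blown-up graph\<close>

lemma mem_nbrs_iff [simp]: "m \<in> nbrs adj w \<longleftrightarrow> adj w m"
  by (simp add: nbrs_def)

lemma Inner_in_Xset_iff [simp]:
  "Inner w S \<in> Xset U V adj \<longleftrightarrow> w \<in> U \<and> S \<in> even_subsets (nbrs adj w)"
  by (auto simp: Xset_def inner_set_def outer_set_def even_subsets_def)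

lemma Outer_in_Xset_iff [simp]: "Outer w m j \<in> Xset U V adj \<longleftrightarrow> w \<in> V \<and> adj w m"
  by (auto simp: Xset_def inner_set_def outer_set_def)

lemma Yset_eq_Xset_swap: "Yset U V adj = Xset V U adj"
  by (auto simp: Xset_def Yset_def)

lemma cubic_bipartite_swap: "cubic_bipartite U V adj \<Longrightarrow> cubic_bipartite V U adj"
  unfolding cubic_bipartite_def by (metis Un_commute inf_commute)

lemma cubic_bipartite_adj_sym: "cubic_bipartite U V adj \<Longrightarrow> adj u v \<longleftrightarrow> adj v u"
  by (simp add: cubic_bipartite_def)

lemma cubic_bipartite_adj_side:
  "cubic_bipartite U V adj \<Longrightarrow> u \<in> U \<Longrightarrow> adj u v \<Longrightarrow> v \<in> V"
  unfolding cubic_bipartite_def by (metis disjoint_iff)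

lemma cubic_bipartite_nbrs_eq:
  assumes "cubic_bipartite U V adj" "w \<in> U \<union> V" "adj w x" "adj w y" "x \<noteq> y"
  obtains z where "nbrs adj w = {x, y, z}" "x \<noteq> z" "y \<noteq> z"
proof -
  have card: "card (nbrs adj w) = 3"
    using assms(1,2) by (simp add: cubic_bipartite_def)
  then have "finite (nbrs adj w)"
    by (metis card.infinite zero_neq_numeral)
  then have "card (nbrs adj w - {x, y}) = 1"
    using card assms(3-5) by (simp add: card_Diff_subset)
  then obtain z where z: "nbrs adj w - {x, y} = {z}"
    by (rule card_1_singletonE)
  then have "adj w z" "x \<noteq> z" "y \<noteq> z"
    by (metis Diff_iff insertCI mem_nbrs_iff)+
  moreover have "nbrs adj w = (nbrs adj w - {x, y}) \<union> {x, y}"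
    using assms(3,4) by auto
  ultimately show thesis
    using that z by simp
qed

lemma cubic_bipartite_other_nbr:
  assumes "cubic_bipartite U V adj" "w \<in> U \<union> V" "adj w x"
  obtains y where "adj w y" "x \<noteq> y"
proof -
  have "card (nbrs adj w) = 3"
    using assms(1,2) by (simp add: cubic_bipartite_def)
  moreover have "finite (nbrs adj w)"
    using calculation by (metis card.infinite zero_neq_numeral)
  ultimately have "card (nbrs adj w - {x}) = 2"
    using assms(3) by simp
  then have "nbrs adj w - {x} \<noteq> {}"
    by (metis card.empty zero_neq_numeral)
  then obtain y where "y \<in> nbrs adj w - {x}"
    by blast
  then show thesis
    using that by (metis DiffE mem_nbrs_iff singletonI)
qed

lemma cubic_bipartite_hat_adj_commute:
  "cubic_bipartite U V adj \<Longrightarrow> hat_adj adj s t = hat_adj adj t s"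
  by (cases s; cases t) (auto simp: cubic_bipartite_def)

lemma hat_adj_InnerE:
  assumes "hat_adj adj (Inner w S) t"
  obtains m where "adj w m" "t = Outer w m (m \<in> S)"
  using assms by (cases t) auto

lemma hat_adj_OuterE:
  assumes "hat_adj adj (Outer v u j) t"
  obtains "adj u v" "t = Outer u v j" | S where "t = Inner v S" "j \<longleftrightarrow> u \<in> S"
  using assms by (cases t) auto

lemma perfect_matching_inv:
  assumes cb: "cubic_bipartite U V adj" and pm: "perfect_matching U V adj \<mu>"
  shows "perfect_matching V U adj (inv_into (Xset U V adj) \<mu>)"
proof -
  have bij: "bij_betw \<mu> (Xset U V adj) (Xset V U adj)"
    using pm by (simp add: perfect_matching_def Yset_eq_Xset_swap)
  have "hat_adj adj y (inv_into (Xset U V adj) \<mu> y)" if "y \<in> Xset V U adj" for y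
  proof -
    let ?x = "inv_into (Xset U V adj) \<mu> y"
    have "?x \<in> Xset U V adj" "\<mu> ?x = y"
      using bij that by (auto simp: bij_betw_def inv_into_into f_inv_into_f)
    then show ?thesis
      using pm cubic_bipartite_hat_adj_commute[OF cb]
      by (auto simp: perfect_matching_def)
  qed
  then show ?thesis
    using bij_betw_inv_into[OF bij]
    by (simp add: perfect_matching_def Yset_eq_Xset_swap[of V U])
qed

lemma perfect_matching_adj:
  "perfect_matching U V adj \<mu> \<Longrightarrow> x \<in> Xset U V adj \<Longrightarrow> hat_adj adj x (\<mu> x)"
  by (simp add: perfect_matching_def)

lemma perfect_matching_eqD:
  "perfect_matching U V adj \<mu> \<Longrightarrow> x \<in> Xset U V adj \<Longrightarrow> x' \<in> Xset U V adj \<Longrightarrow> \<mu> x = \<mu> x'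
    \<Longrightarrow> x = x'"
  by (auto simp: perfect_matching_def bij_betw_def inj_on_def)

lemma perfect_matching_inv_eq:
  "perfect_matching U V adj \<mu> \<Longrightarrow> x \<in> Xset U V adj \<Longrightarrow> \<mu> x = y \<Longrightarrow> inv_into (Xset U V adj) \<mu> y = x"
  by (auto simp: perfect_matching_def bij_betw_def inv_into_f_f)

lemma perfect_matching_inv_apply:
  assumes "perfect_matching U V adj \<mu>" "y \<in> Xset V U adj"
  shows "inv_into (Xset U V adj) \<mu> y \<in> Xset U V adj" "\<mu> (inv_into (Xset U V adj) \<mu> y) = y"
  using assms by (auto simp: perfect_matching_def bij_betw_def Yset_eq_Xset_swap inv_into_into
      f_inv_into_f)

lemma perfect_matching_into_Yset:
  "perfect_matching U V adj \<mu> \<Longrightarrow> x \<in> Xset U V adj \<Longrightarrow> \<mu> x \<in> Xset V U adj"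
  by (auto simp: perfect_matching_def bij_betw_def Yset_eq_Xset_swap)

lemma perfect_matching_inner_matching:
  assumes pm: "perfect_matching U V adj \<mu>" and w: "w \<in> U"
  shows "inner_matching (Outer w) (nbrs adj w) (\<lambda>S. \<mu> (Inner w S))"
  unfolding inner_matching_def
proof
  have "inj_on \<mu> (Xset U V adj)"
    using pm by (simp add: perfect_matching_def bij_betw_def)
  then show "inj_on (\<lambda>S. \<mu> (Inner w S)) (even_subsets (nbrs adj w))"
    using w by (intro inj_onI) (metis Inner_in_Xset_iff hv.inject(1) inj_onD)
  show "\<forall>S \<in> even_subsets (nbrs adj w). \<exists>m \<in> nbrs adj w. \<mu> (Inner w S) = Outer w m (m \<in> S)"
  proof
    fix S assume "S \<in> even_subsets (nbrs adj w)"
    then have "hat_adj adj (Inner w S) (\<mu> (Inner w S))"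
      using perfect_matching_adj[OF pm] w by simp
    then show "\<exists>m \<in> nbrs adj w. \<mu> (Inner w S) = Outer w m (m \<in> S)"
      by (elim hat_adj_InnerE) auto
  qed
qed

lemma perfect_matchings_inner_cycle:
  assumes cb: "cubic_bipartite U V adj"
    and pm1: "perfect_matching U V adj \<mu>1" and pm2: "perfect_matching U V adj \<mu>2"
    and w: "w \<in> U" and xy: "adj w x" "adj w y" "x \<noteq> y"
    and fixed1: "\<mu>1 (Outer x w a) = Outer w x a" "\<mu>1 (Outer y w b) = Outer w y b"
    and fixed2: "\<mu>2 (Outer x w a) = Outer w x a" "\<mu>2 (Outer y w b) = Outer w y b"
    and S: "S0 \<in> even_subsets (nbrs adj w)" "S1 \<in> even_subsets (nbrs adj w)"
      "S2 \<in> even_subsets (nbrs adj w)"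
    and chain: "\<mu>2 (Inner w S0) = \<mu>1 (Inner w S1)" "\<mu>2 (Inner w S1) = \<mu>1 (Inner w S2)"
  shows "\<mu>2 (Inner w S2) = \<mu>1 (Inner w S0)"
proof -
  obtain z where nbrs: "nbrs adj w = {x, y, z}" "x \<noteq> z" "y \<noteq> z"
    using cubic_bipartite_nbrs_eq[OF cb _ xy] w by blast
  have outer_X: "Outer x w a \<in> Xset U V adj" "Outer y w b \<in> Xset U V adj"
    using cubic_bipartite_adj_side[OF cb w] xy cubic_bipartite_adj_sym[OF cb] by auto
  have avoid: "\<mu>1 (Inner w S) \<noteq> Outer w x a \<and> \<mu>1 (Inner w S) \<noteq> Outer w y b"
    "\<mu>2 (Inner w S) \<noteq> Outer w x a \<and> \<mu>2 (Inner w S) \<noteq> Outer w y b"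
    if "S \<in> even_subsets {x, y, z}" for S
    using perfect_matching_eqD[OF pm1 _ outer_X(1)] perfect_matching_eqD[OF pm1 _ outer_X(2)]
      perfect_matching_eqD[OF pm2 _ outer_X(1)] perfect_matching_eqD[OF pm2 _ outer_X(2)]
      fixed1 fixed2 w that nbrs(1) by (metis Inner_in_Xset_iff hv.distinct(1))+
  have "inner_matching (Outer w) {x, y, z} (\<lambda>S. \<mu>1 (Inner w S))"
    "inner_matching (Outer w) {x, y, z} (\<lambda>S. \<mu>2 (Inner w S))"
    using perfect_matching_inner_matching[OF pm1 w] perfect_matching_inner_matching[OF pm2 w]
    unfolding nbrs(1) .
  from inner_matchings_cycle[OF _ xy(3) nbrs(2,3) this avoid(1) avoid(2) S[unfolded nbrs(1)] chain]
  show ?thesis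
    by simp
qed

lemma perfect_matching_inner_rematch:
  assumes cb: "cubic_bipartite U V adj" and pm: "perfect_matching U V adj \<mu>"
    and w: "w \<in> U" and n: "adj w n" and fixed: "\<mu> (Outer n w i) = Outer w n i"
    and T: "T \<in> even_subsets (nbrs adj w)" "\<mu> (Inner w T) = Outer w n (\<not> i)"
  shows "\<exists>T' \<in> even_subsets (nbrs adj w). (n \<in> T' \<longleftrightarrow> i) \<and>
    (\<exists>m. adj w m \<and> \<mu> (Inner w T') = Outer w m (m \<in> T))"
proof -
  obtain y where "adj w y" "n \<noteq> y"
    using cubic_bipartite_other_nbr[OF cb _ n] w by blast
  then obtain z where nbrs: "nbrs adj w = {n, y, z}" "n \<noteq> z" "y \<noteq> z"
    using cubic_bipartite_nbrs_eq[OF cb _ n] w by blast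
  have outer_X: "Outer n w i \<in> Xset U V adj"
    using cubic_bipartite_adj_side[OF cb w] n cubic_bipartite_adj_sym[OF cb] by auto
  have "\<mu> (Inner w S) \<noteq> Outer w n i" if "S \<in> even_subsets {n, y, z}" for S
    using perfect_matching_eqD[OF pm _ outer_X] fixed w that nbrs(1)
    by (metis Inner_in_Xset_iff hv.distinct(1))
  then obtain T' m where "T' \<in> even_subsets {n, y, z}" "n \<in> T' \<longleftrightarrow> i" "m \<in> {n, y, z}"
    "\<mu> (Inner w T') = Outer w m (m \<in> T)"
    using inner_matching_rematch[of "Outer w" n y z, OF _ \<open>n \<noteq> y\<close> nbrs(2,3),
        where \<phi> = "\<lambda>S. \<mu> (Inner w S)"]
      perfect_matching_inner_matching[OF pm w] T unfolding nbrs(1) by blast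
  moreover have "adj w m" if "m \<in> {n, y, z}" for m
    using that nbrs(1) by (metis mem_nbrs_iff)
  ultimately show ?thesis
    unfolding nbrs(1) by blast
qed

section \<open>Matchings with a prescribed pattern on a 2-factor\<close>

definition matching_with_pattern :: "'a set \<Rightarrow> 'a set \<Rightarrow> ('a \<Rightarrow> 'a \<Rightarrow> bool) \<Rightarrow> 'a set set
    \<Rightarrow> ('a set \<Rightarrow> bool) \<Rightarrow> ('a hv \<Rightarrow> 'a hv) \<Rightarrow> bool" where
  "matching_with_pattern U V adj F f \<mu> \<longleftrightarrow> perfect_matching U V adj \<mu> \<and>
     (\<forall>u \<in> U. \<forall>v \<in> V. \<forall>i. adj u v \<longrightarrow>
        (\<mu> (Outer v u i) = Outer u v i \<longleftrightarrow> {u, v} \<in> F \<and> i = f {u, v}))"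

lemma edge_used_iff:
  assumes "U \<inter> V = {}" "u \<in> U" "v \<in> V"
  shows "edge_used U V \<mu> {u, v} i \<longleftrightarrow> \<mu> (Outer v u i) = Outer u v i"
  using assms unfolding edge_used_def by (auto simp: doubleton_eq_iff)

lemma mu_Ff_imp_matching_with_pattern:
  assumes cb: "cubic_bipartite U V adj" and mu: "\<mu> \<in> mu_Ff U V adj F f"
  shows "matching_with_pattern U V adj F f \<mu>"
  unfolding matching_with_pattern_def
proof (intro conjI ballI allI impI)
  show "perfect_matching U V adj \<mu>"
    using mu by (simp add: mu_Ff_def uniform_pm_def)
  fix u v i assume u: "u \<in> U" and v: "v \<in> V" and "adj u v"
  then have e: "{u, v} \<in> edges adj"
    by (auto simp: edges_def)
  have used: "edge_used U V \<mu> {u, v} j \<longleftrightarrow> \<mu> (Outer v u j) = Outer u v j" for j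
    using cb u v by (intro edge_used_iff) (auto simp: cubic_bipartite_def)
  show "\<mu> (Outer v u i) = Outer u v i \<longleftrightarrow> {u, v} \<in> F \<and> i = f {u, v}"
  proof (cases "{u, v} \<in> F")
    case True
    then show ?thesis
      using mu used by (auto simp: mu_Ff_def)
  next
    case False
    then have "edge_used U V \<mu> {u, v} False = edge_used U V \<mu> {u, v} True"
      using mu e by (auto simp: mu_Ff_def F_mu_def)
    moreover have "\<not> (edge_used U V \<mu> {u, v} False \<and> edge_used U V \<mu> {u, v} True)"
      using mu e by (auto simp: mu_Ff_def uniform_pm_def)
    ultimately have "\<not> edge_used U V \<mu> {u, v} i"
      by (cases i) auto
    then show ?thesis
      using False used by auto
  qed
qed

lemma matching_with_pattern_cong:
  "matching_with_pattern U V adj F f \<mu> \<Longrightarrow> (\<And>e. e \<in> F \<Longrightarrow> f e = g e)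
    \<Longrightarrow> matching_with_pattern U V adj F g \<mu>"
  unfolding matching_with_pattern_def by auto

lemma two_factor_edgeE:
  assumes cb: "cubic_bipartite U V adj" and tf: "two_factor U V adj F" and e: "e \<in> F"
  obtains u v where "e = {u, v}" "u \<in> U" "v \<in> V" "adj u v"
proof -
  obtain a b where ab: "e = {a, b}" "adj a b"
    using e tf by (auto simp: two_factor_def edges_def)
  moreover have "a \<in> U \<and> b \<in> V \<or> b \<in> U \<and> a \<in> V"
    using cb ab(2) unfolding cubic_bipartite_def by blast
  ultimately show thesis
    using that cubic_bipartite_adj_sym[OF cb] by (metis insert_commute)
qed

lemma two_factor_finite:
  assumes cb: "cubic_bipartite U V adj" and tf: "two_factor U V adj F"
  shows "finite F"
proof -
  have "F \<subseteq> Pow (U \<union> V)"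
  proof
    fix e assume "e \<in> F"
    then obtain u v where "e = {u, v}" "u \<in> U" "v \<in> V"
      using two_factor_edgeE[OF cb tf] by metis
    then show "e \<in> Pow (U \<union> V)"
      by simp
  qed
  moreover have "finite (U \<union> V)"
    using cb by (simp add: cubic_bipartite_def)
  ultimately show ?thesis
    by (meson finite_Pow_iff finite_subset)
qed

lemma two_factor_nbrs:
  assumes cb: "cubic_bipartite U V adj" and tf: "two_factor U V adj F" and w: "w \<in> U \<union> V"
  obtains x y where "x \<noteq> y" "adj w x" "adj w y" "{w, x} \<in> F" "{w, y} \<in> F"
proof -
  have edge: "\<exists>x. e = {w, x} \<and> adj w x" if "e \<in> F" "w \<in> e" for e
  proof -
    have "e \<in> edges adj"
      using that tf by (auto simp: two_factor_def)
    then obtain a b where "e = {a, b}" "adj a b"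
      unfolding edges_def by blast
    then show ?thesis
      using that(2) cubic_bipartite_adj_sym[OF cb] by (metis empty_iff insert_commute insert_iff)
  qed
  have "card {e \<in> F. w \<in> e} = 2"
    using tf w by (simp add: two_factor_def)
  then obtain e1 e2 where "{e \<in> F. w \<in> e} = {e1, e2}" "e1 \<noteq> e2"
    by (auto simp: card_2_iff)
  then have "e1 \<in> F" "w \<in> e1" "e2 \<in> F" "w \<in> e2" "e1 \<noteq> e2"
    by blast+
  with edge that show thesis
    by metis
qed

lemma matching_with_pattern_perfect:
  "matching_with_pattern U V adj F f \<mu> \<Longrightarrow> perfect_matching U V adj \<mu>"
  by (simp add: matching_with_pattern_def)

lemma matching_with_pattern_fixed:
  assumes "matching_with_pattern U V adj F f \<mu>" "u \<in> U" "v \<in> V" "adj u v" "{u, v} \<in> F"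
  shows "\<mu> (Outer v u (f {u, v})) = Outer u v (f {u, v})"
  using assms by (simp add: matching_with_pattern_def)

lemma matching_with_pattern_inv_fixed:
  assumes cb: "cubic_bipartite U V adj" and P: "matching_with_pattern U V adj F f \<mu>"
    and w: "w \<in> V" and x: "adj w x" "{w, x} \<in> F"
  shows "inv_into (Xset U V adj) \<mu> (Outer x w (f {w, x})) = Outer w x (f {w, x})"
proof (rule perfect_matching_inv_eq[OF matching_with_pattern_perfect[OF P]])
  have "x \<in> U" "adj x w" "{x, w} \<in> F"
    using cubic_bipartite_adj_side[OF cubic_bipartite_swap[OF cb] w] x
      cubic_bipartite_adj_sym[OF cb] by (auto simp: insert_commute)
  then have "\<mu> (Outer w x (f {x, w})) = Outer x w (f {x, w})"
    using matching_with_pattern_fixed[OF P _ w] by blast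
  then show "\<mu> (Outer w x (f {w, x})) = Outer x w (f {w, x})"
    by (simp add: insert_commute)
  show "Outer w x (f {w, x}) \<in> Xset U V adj"
    using w x by simp
qed

lemma matching_with_pattern_across:
  assumes cb: "cubic_bipartite U V adj"
    and P1: "matching_with_pattern U V adj F f \<mu>1" and P2: "matching_with_pattern U V adj F f \<mu>2"
    and x: "Outer v u j \<in> Xset U V adj" and across: "\<mu>1 (Outer v u j) = Outer u v j"
  shows "\<mu>2 (Outer v u j) = Outer u v j"
proof -
  have "v \<in> V" "adj v u"
    using x by simp_all
  then have "u \<in> U" "adj u v"
    using cubic_bipartite_adj_side[OF cubic_bipartite_swap[OF cb]] cubic_bipartite_adj_sym[OF cb]
    by blast+
  then show ?thesis
    using P1 P2 across \<open>v \<in> V\<close> by (simp add: matching_with_pattern_def)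
qed

lemma same_pattern_preimage_Inner:
  assumes cb: "cubic_bipartite U V adj"
    and P1: "matching_with_pattern U V adj F f \<mu>1" and P2: "matching_with_pattern U V adj F f \<mu>2"
    and x: "x \<in> Xset U V adj" and S: "Inner w S \<in> Xset U V adj"
    and eq: "\<mu>1 x = \<mu>2 (Inner w S)"
  shows "\<exists>S'. x = Inner w S'"
proof -
  note pm1 = matching_with_pattern_perfect[OF P1] and pm2 = matching_with_pattern_perfect[OF P2]
  obtain m where m: "\<mu>2 (Inner w S) = Outer w m (m \<in> S)"
    using perfect_matching_adj[OF pm2 S] by (rule hat_adj_InnerE)
  have adj_x: "hat_adj adj x (Outer w m (m \<in> S))"
    using perfect_matching_adj[OF pm1 x] eq m by simp
  show ?thesis
  proof (cases x)
    case (Outer v u j)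
    then have "x = Outer m w (m \<in> S)"
      using adj_x by auto
    then have "\<mu>2 x = \<mu>2 (Inner w S)"
      using matching_with_pattern_across[OF cb P1 P2, of m w "m \<in> S"] x eq m by simp
    then show ?thesis
      using perfect_matching_eqD[OF pm2 x S] by blast
  qed (use adj_x in simp)
qed

lemma same_pattern_image_Inner:
  assumes cb: "cubic_bipartite U V adj"
    and P1: "matching_with_pattern U V adj F f \<mu>1" and P2: "matching_with_pattern U V adj F f \<mu>2"
    and x: "x \<in> Xset U V adj" and eq: "\<mu>1 x = Inner w c"
  shows "\<exists>c'. \<mu>2 x = Inner w c'"
proof -
  have "hat_adj adj (Inner w c) x"
    using perfect_matching_adj[OF matching_with_pattern_perfect[OF P1] x] eq
      cubic_bipartite_hat_adj_commute[OF cb] by simp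
  then obtain m where m: "x = Outer w m (m \<in> c)"
    by (rule hat_adj_InnerE)
  have "hat_adj adj (Outer w m (m \<in> c)) (\<mu>2 x)"
    using perfect_matching_adj[OF matching_with_pattern_perfect[OF P2] x] m by simp
  then show ?thesis
  proof (rule hat_adj_OuterE)
    assume "adj m w" "\<mu>2 x = Outer m w (m \<in> c)"
    then show ?thesis
      using matching_with_pattern_across[OF cb P2 P1] x eq m by simp
  qed blast
qed

lemma same_pattern_chain_closes_Inner:
  assumes cb: "cubic_bipartite U V adj" and tf: "two_factor U V adj F"
    and P1: "matching_with_pattern U V adj F f \<mu>1" and P2: "matching_with_pattern U V adj F f \<mu>2"
    and X: "x0 \<in> Xset U V adj" "x1 \<in> Xset U V adj" "x2 \<in> Xset U V adj" "x3 \<in> Xset U V adj"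
    and chain: "\<mu>1 x1 = \<mu>2 x0" "\<mu>1 x2 = \<mu>2 x1" "\<mu>1 x3 = \<mu>2 x2"
    and x0: "x0 = Inner w S0"
  shows "x3 = x0"
proof -
  note pm1 = matching_with_pattern_perfect[OF P1] and pm2 = matching_with_pattern_perfect[OF P2]
  have w: "w \<in> U"
    using X(1) x0 by simp
  obtain S1 where x1: "x1 = Inner w S1"
    using same_pattern_preimage_Inner[OF cb P1 P2 X(2) _ chain(1)[unfolded x0]] X(1) x0 by blast
  obtain S2 where x2: "x2 = Inner w S2"
    using same_pattern_preimage_Inner[OF cb P1 P2 X(3) _ chain(2)[unfolded x1]] X(2) x1 by blast
  obtain x y where xy: "x \<noteq> y" "adj w x" "adj w y" "{w, x} \<in> F" "{w, y} \<in> F"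
    using two_factor_nbrs[OF cb tf] w by blast
  have "x \<in> V" "y \<in> V"
    using cubic_bipartite_adj_side[OF cb w] xy(2,3) by blast+
  then have fixed: "\<mu> (Outer x w (f {w, x})) = Outer w x (f {w, x})"
    "\<mu> (Outer y w (f {w, y})) = Outer w y (f {w, y})"
    if "matching_with_pattern U V adj F f \<mu>" for \<mu>
    using matching_with_pattern_fixed[OF that w] xy by simp_all
  have "\<mu>2 (Inner w S2) = \<mu>1 (Inner w S0)"
    by (rule perfect_matchings_inner_cycle[OF cb pm1 pm2 w xy(2,3,1) fixed[OF P1] fixed[OF P2]])
      (use X chain x0 x1 x2 in simp_all)
  then show ?thesis
    using perfect_matching_eqD[OF pm1 X(4) X(1)] chain(3) x0 x2 by simp
qed

lemma same_pattern_chain_closes_Outer: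
  assumes cb: "cubic_bipartite U V adj" and tf: "two_factor U V adj F"
    and P1: "matching_with_pattern U V adj F f \<mu>1" and P2: "matching_with_pattern U V adj F f \<mu>2"
    and X: "x0 \<in> Xset U V adj" "x1 \<in> Xset U V adj" "x2 \<in> Xset U V adj" "x3 \<in> Xset U V adj"
    and chain: "\<mu>1 x1 = \<mu>2 x0" "\<mu>1 x2 = \<mu>2 x1" "\<mu>1 x3 = \<mu>2 x2"
    and x0: "x0 = Outer w m j"
  shows "x3 = x0"
proof -
  note pm1 = matching_with_pattern_perfect[OF P1] and pm2 = matching_with_pattern_perfect[OF P2]
  have w: "w \<in> V"
    using X(1) x0 by simp
  consider "\<mu>2 x0 = Outer m w j" | c0 where "\<mu>2 x0 = Inner w c0"
    using perfect_matching_adj[OF pm2 X(1)] unfolding x0 by (rule hat_adj_OuterE) auto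
  then show ?thesis
  proof cases
    case 1
    then have "\<mu>1 x0 = \<mu>2 x0"
      using matching_with_pattern_across[OF cb P2 P1] X(1) x0 by simp
    then show ?thesis
      using chain perfect_matching_eqD[OF pm1] X by metis
  next
    case (2 c0)
    obtain c1 where c1: "\<mu>2 x1 = Inner w c1"
      using same_pattern_image_Inner[OF cb P1 P2 X(2)] chain(1) 2 by metis
    obtain c2 where c2: "\<mu>2 x2 = Inner w c2"
      using same_pattern_image_Inner[OF cb P1 P2 X(3)] chain(2) c1 by metis
    txt \<open>The inner vertices of the gadget of w lie in Y, so the inner cycle lemma is applied to
      the inverse matchings, which are perfect matchings of the graph with U and V swapped.\<close>
    define \<nu>1 where "\<nu>1 = inv_into (Xset U V adj) \<mu>1"
    define \<nu>2 where "\<nu>2 = inv_into (Xset U V adj) \<mu>2"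
    have pm': "perfect_matching V U adj \<nu>1" "perfect_matching V U adj \<nu>2"
      unfolding \<nu>1_def \<nu>2_def using perfect_matching_inv[OF cb] pm1 pm2 by blast+
    obtain x y where xy: "x \<noteq> y" "adj w x" "adj w y" "{w, x} \<in> F" "{w, y} \<in> F"
      using two_factor_nbrs[OF cb tf] w by blast
    have "\<nu>1 (Inner w c2) = \<nu>2 (Inner w c0)"
    proof (rule perfect_matchings_inner_cycle[OF cubic_bipartite_swap[OF cb] pm'(2,1) w xy(2,3,1)])
      show "\<nu>2 (Outer x w (f {w, x})) = Outer w x (f {w, x})"
        "\<nu>2 (Outer y w (f {w, y})) = Outer w y (f {w, y})"
        "\<nu>1 (Outer x w (f {w, x})) = Outer w x (f {w, x})"
        "\<nu>1 (Outer y w (f {w, y})) = Outer w y (f {w, y})"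
        unfolding \<nu>1_def \<nu>2_def using matching_with_pattern_inv_fixed[OF cb _ w] P1 P2 xy by blast+
      show "c0 \<in> even_subsets (nbrs adj w)" "c1 \<in> even_subsets (nbrs adj w)"
        "c2 \<in> even_subsets (nbrs adj w)"
        using perfect_matching_into_Yset[OF pm2] X 2 c1 c2 by (metis Inner_in_Xset_iff)+
      show "\<nu>1 (Inner w c0) = \<nu>2 (Inner w c1)" "\<nu>1 (Inner w c1) = \<nu>2 (Inner w c2)"
        unfolding \<nu>1_def \<nu>2_def
        using perfect_matching_inv_eq[OF pm1] perfect_matching_inv_eq[OF pm2] X chain 2 c1 c2
        by metis+
    qed
    then show ?thesis
      unfolding \<nu>1_def \<nu>2_def
      using perfect_matching_inv_eq[OF pm1] perfect_matching_inv_eq[OF pm2] X chain 2 c2 by metis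
  qed
qed

lemma same_pattern_chain_closes:
  assumes "cubic_bipartite U V adj" "two_factor U V adj F"
    and "matching_with_pattern U V adj F f \<mu>1" "matching_with_pattern U V adj F f \<mu>2"
    and "x0 \<in> Xset U V adj" "x1 \<in> Xset U V adj" "x2 \<in> Xset U V adj" "x3 \<in> Xset U V adj"
    and "\<mu>1 x1 = \<mu>2 x0" "\<mu>1 x2 = \<mu>2 x1" "\<mu>1 x3 = \<mu>2 x2"
  shows "x3 = x0"
proof (cases x0)
  case (Inner w S)
  then show ?thesis
    using same_pattern_chain_closes_Inner[OF assms] by blast
next
  case (Outer w m j)
  then show ?thesis
    using same_pattern_chain_closes_Outer[OF assms] by blast
qed

lemma pm_sgn_eq_if_same_pattern:
  assumes cb: "cubic_bipartite U V adj" and tf: "two_factor U V adj F"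
    and eta: "bij_betw \<eta> (Xset U V adj) {1..10 * card U}"
    and eta': "bij_betw \<eta>' (Yset U V adj) {1..10 * card U}"
    and P1: "matching_with_pattern U V adj F f \<mu>1" and P2: "matching_with_pattern U V adj F f \<mu>2"
  shows "pm_sgn U V adj \<eta> \<eta>' \<mu>2 = pm_sgn U V adj \<eta> \<eta>' \<mu>1"
proof -
  define X where "X = Xset U V adj"
  have bij1: "bij_betw \<mu>1 X (Yset U V adj)" and bij2: "bij_betw \<mu>2 X (Yset U V adj)"
    using P1 P2 by (simp_all add: matching_with_pattern_def perfect_matching_def X_def)
  define \<sigma> where "\<sigma> = restrict_id (\<lambda>x. inv_into X \<mu>1 (\<mu>2 x)) X"
  have \<sigma>: "\<sigma> x \<in> X" "\<mu>1 (\<sigma> x) = \<mu>2 x" if "x \<in> X" for x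
  proof -
    have "\<mu>2 x \<in> \<mu>1 ` X"
      using bij1 bij2 that by (metis bij_betw_def imageI)
    then show "\<sigma> x \<in> X" "\<mu>1 (\<sigma> x) = \<mu>2 x"
      using that by (simp_all add: \<sigma>_def inv_into_into f_inv_into_f)
  qed
  have perm: "\<sigma> permutes X"
  proof -
    have "bij_betw (inv_into X \<mu>1 \<circ> \<mu>2) X X"
      using bij_betw_trans[OF bij2 bij_betw_inv_into[OF bij1]] .
    then show ?thesis
      unfolding \<sigma>_def o_def by (rule permutes_restrict_id)
  qed
  have "\<sigma> \<circ> \<sigma> \<circ> \<sigma> = id"
  proof
    fix x
    show "(\<sigma> \<circ> \<sigma> \<circ> \<sigma>) x = id x"
    proof (cases "x \<in> X")
      case True
      then show ?thesis
        using same_pattern_chain_closes[OF cb tf P1 P2, of x "\<sigma> x" "\<sigma> (\<sigma> x)" "\<sigma> (\<sigma> (\<sigma> x))"] \<sigma>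
        unfolding X_def by simp
    next
      case False
      then show ?thesis
        by (simp add: \<sigma>_def restrict_id_def)
    qed
  qed
  moreover have "finite X"
    using bij_betw_finite[OF eta] by (simp add: X_def)
  ultimately have "sign \<sigma> = 1"
    using sign_eq_1_if_cube_id permutes_imp_permutation perm by blast
  then show ?thesis
    using pm_sgn_compose_permutes[OF eta eta' bij1[unfolded X_def] perm[unfolded X_def]] \<sigma>(2)
    unfolding X_def by simp
qed

section \<open>Flipping the pattern on one edge\<close>

text \<open>Data for flipping the bit of the edge {u,v} of F from i to \<not> i: the matching is
  precomposed with the 5-cycle through b_{v,u,\<not>i}, a_{u,T}, a_{u,T'}, b_{v,u,i} and
  b_{v,m,[m\<in>S]}; a_{u,T'} and b_{v,m,[m\<in>S]} are supplied by perfect_matching_inner_rematch,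
  applied at u to the matching and at v to its inverse.\<close>
locale pattern_flip =
  fixes U V :: "'a set" and adj :: "'a \<Rightarrow> 'a \<Rightarrow> bool" and F :: "'a set set"
    and f :: "'a set \<Rightarrow> bool" and \<mu> :: "'a hv \<Rightarrow> 'a hv"
    and u v m m' :: 'a and i :: bool and S S' T T' :: "'a set"
  assumes cb: "cubic_bipartite U V adj" and P: "matching_with_pattern U V adj F f \<mu>"
    and uv: "u \<in> U" "v \<in> V" "adj u v" "{u, v} \<in> F" "i = f {u, v}"
    and p: "\<mu> (Outer v u (\<not> i)) = Inner v S"
    and a: "Inner u T \<in> Xset U V adj" "\<mu> (Inner u T) = Outer u v (\<not> i)"
    and a': "Inner u T' \<in> Xset U V adj" "v \<in> T' \<longleftrightarrow> i" "adj u m'"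
      "\<mu> (Inner u T') = Outer u m' (m' \<in> T)"
    and r: "adj v m" "\<mu> (Outer v m (m \<in> S)) = Inner v S'" "u \<in> S' \<longleftrightarrow> i"
begin

definition rotation :: "'a hv \<Rightarrow> 'a hv" where
  "rotation = cycle_of_list
     [Outer v u (\<not> i), Inner u T, Inner u T', Outer v u i, Outer v m (m \<in> S)]"

lemma perfect_matching_mu: "perfect_matching U V adj \<mu>"
  using matching_with_pattern_perfect[OF P] .

lemma mu_Outer_i: "\<mu> (Outer v u i) = Outer u v i"
  using matching_with_pattern_fixed[OF P uv(1-4)] uv(5) by simp

lemma in_Xset:
  "Outer v u b \<in> Xset U V adj" "Outer v m (m \<in> S) \<in> Xset U V adj"
  using uv r(1) cubic_bipartite_adj_sym[OF cb] by auto

lemma u_in_S: "u \<in> S \<longleftrightarrow> \<not> i"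
  using perfect_matching_adj[OF perfect_matching_mu in_Xset(1)[of "\<not> i"]] p by auto

lemma v_in_T: "v \<in> T \<longleftrightarrow> \<not> i"
  using perfect_matching_adj[OF perfect_matching_mu a(1)] a(2) by simp

lemma adj_vu: "adj v u"
  using uv(3) cubic_bipartite_adj_sym[OF cb] by blast

lemma S_even: "S \<in> even_subsets (nbrs adj v)" "S' \<in> even_subsets (nbrs adj v)"
  using perfect_matching_into_Yset[OF perfect_matching_mu in_Xset(1)[of "\<not> i"]]
    perfect_matching_into_Yset[OF perfect_matching_mu in_Xset(2)] p r(2) by simp_all

lemma distinct_rotation:
  "distinct [Outer v u (\<not> i), Inner u T, Inner u T', Outer v u i, Outer v m (m \<in> S)]"
proof -
  have "S \<noteq> S'"
    using u_in_S r(3) by auto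
  then have "Outer v u (\<not> i) \<noteq> Outer v m (m \<in> S)"
    using p r(2) by (metis hv.inject(1))
  moreover have "Outer v u i \<noteq> Outer v m (m \<in> S)"
    using mu_Outer_i r(2) by (metis hv.distinct(1))
  moreover have "Inner u T \<noteq> Inner u T'"
    using a'(2) v_in_T by auto
  ultimately show ?thesis
    by simp
qed

lemma rotation_apply:
  "rotation (Outer v u (\<not> i)) = Inner u T" "rotation (Inner u T) = Inner u T'"
  "rotation (Inner u T') = Outer v u i" "rotation (Outer v u i) = Outer v m (m \<in> S)"
  "rotation (Outer v m (m \<in> S)) = Outer v u (\<not> i)"
  "x \<notin> {Outer v u (\<not> i), Inner u T, Inner u T', Outer v u i, Outer v m (m \<in> S)} \<Longrightarrow> rotation x = x"
  using distinct_rotation by (auto simp: rotation_def transpose_def id_outside_supp)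

lemma sign_rotation: "sign rotation = 1"
  using sign_cycle_of_list[OF distinct_rotation] by (simp add: rotation_def)

lemma rotation_permutes: "rotation permutes Xset U V adj"
proof -
  have "set [Outer v u (\<not> i), Inner u T, Inner u T', Outer v u i, Outer v m (m \<in> S)]
      \<subseteq> Xset U V adj"
    using in_Xset a(1) a'(1) by auto
  then show ?thesis
    unfolding rotation_def using cycle_permutes permutes_subset by blast
qed

lemma adj_rotated:
  "hat_adj adj (Outer v u (\<not> i)) (Outer u v (\<not> i))"
  "hat_adj adj (Inner u T) (Outer u m' (m' \<in> T))"
  "hat_adj adj (Inner u T') (Outer u v i)"
  "hat_adj adj (Outer v u i) (Inner v S')"
  "hat_adj adj (Outer v m (m \<in> S)) (Inner v S)"
  using uv(3) a(1) a'(1-3) adj_vu S_even r(1,3) by (auto simp: even_subsets_def)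

lemma perfect_matching_rotated: "perfect_matching U V adj (\<mu> \<circ> rotation)"
  unfolding perfect_matching_def
proof
  have "bij_betw \<mu> (Xset U V adj) (Yset U V adj)"
    using perfect_matching_mu by (simp add: perfect_matching_def)
  then show "bij_betw (\<mu> \<circ> rotation) (Xset U V adj) (Yset U V adj)"
    by (rule bij_betw_trans[OF permutes_imp_bij[OF rotation_permutes]])
  show "\<forall>x \<in> Xset U V adj. hat_adj adj x ((\<mu> \<circ> rotation) x)"
  proof
    fix x assume x: "x \<in> Xset U V adj"
    consider "x = Outer v u (\<not> i)" | "x = Inner u T" | "x = Inner u T'" | "x = Outer v u i"
      | "x = Outer v m (m \<in> S)"
      | "x \<notin> {Outer v u (\<not> i), Inner u T, Inner u T', Outer v u i, Outer v m (m \<in> S)}"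
      by blast
    then show "hat_adj adj x ((\<mu> \<circ> rotation) x)"
      by cases (use rotation_apply a(2) a'(4) mu_Outer_i p r(2) adj_rotated perfect_matching_adj[OF perfect_matching_mu x]
          in simp_all)
  qed
qed

lemma pattern_rotated:
  "matching_with_pattern U V adj F (f({u, v} := \<not> i)) (\<mu> \<circ> rotation)"
  unfolding matching_with_pattern_def
proof (intro conjI perfect_matching_rotated ballI allI impI)
  fix u0 v0 i0 assume u0: "u0 \<in> U" and v0: "v0 \<in> V" and "adj u0 v0"
  show "(\<mu> \<circ> rotation) (Outer v0 u0 i0) = Outer u0 v0 i0 \<longleftrightarrow>
    {u0, v0} \<in> F \<and> i0 = (f({u, v} := \<not> i)) {u0, v0}"
  proof (cases "u0 = u \<and> v0 = v")
    case True
    then show ?thesis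
      using rotation_apply(1,4) a(2) r(2) uv(4) by (cases "i0 = i") auto
  next
    case False
    have "{u0, v0} \<noteq> {u, v}"
      using False u0 v0 uv(1,2) cb by (auto simp: doubleton_eq_iff cubic_bipartite_def)
    moreover have "(\<mu> \<circ> rotation) (Outer v0 u0 i0) = Outer u0 v0 i0 \<longleftrightarrow>
        \<mu> (Outer v0 u0 i0) = Outer u0 v0 i0"
      using False rotation_apply(5,6) p r(2) by (cases "Outer v0 u0 i0 = Outer v m (m \<in> S)") auto
    ultimately show ?thesis
      using P u0 v0 \<open>adj u0 v0\<close> by (simp add: matching_with_pattern_def)
  qed
qed

end

lemma pm_sgn_flip_pattern:
  assumes cb: "cubic_bipartite U V adj" and tf: "two_factor U V adj F"
    and eta: "bij_betw \<eta> (Xset U V adj) {1..10 * card U}"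
    and eta': "bij_betw \<eta>' (Yset U V adj) {1..10 * card U}"
    and P: "matching_with_pattern U V adj F f \<mu>" and e: "e \<in> F"
  obtains \<mu>' where "matching_with_pattern U V adj F (f(e := \<not> f e)) \<mu>'"
    "pm_sgn U V adj \<eta> \<eta>' \<mu>' = pm_sgn U V adj \<eta> \<eta>' \<mu>"
proof -
  note pm = matching_with_pattern_perfect[OF P]
  obtain u v where edge: "e = {u, v}" "u \<in> U" "v \<in> V" "adj u v"
    using two_factor_edgeE[OF cb tf e] .
  have vu: "adj v u"
    using edge(4) cubic_bipartite_adj_sym[OF cb] by blast
  define i where "i = f {u, v}"
  have q: "\<mu> (Outer v u i) = Outer u v i"
    using matching_with_pattern_fixed[OF P edge(2-4)] e edge(1) by (simp add: i_def)
  have "\<mu> (Outer v u (\<not> i)) \<noteq> Outer u v (\<not> i)"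
    using P edge by (simp add: matching_with_pattern_def i_def)
  then obtain S where p: "\<mu> (Outer v u (\<not> i)) = Inner v S"
    using perfect_matching_adj[OF pm, of "Outer v u (\<not> i)"] edge(3) vu
    by (auto elim: hat_adj_OuterE)
  define a where "a = inv_into (Xset U V adj) \<mu> (Outer u v (\<not> i))"
  have a: "a \<in> Xset U V adj" "\<mu> a = Outer u v (\<not> i)"
    using perfect_matching_inv_apply[OF pm, of "Outer u v (\<not> i)"] edge by (simp_all add: a_def)
  obtain T where T: "a = Inner u T"
    using perfect_matching_adj[OF pm a(1)] a(2) p
    by (cases a) (auto simp: cubic_bipartite_hat_adj_commute[OF cb])
  have T_even: "T \<in> even_subsets (nbrs adj u)"
    using a(1) T by simp
  obtain T' m' where T': "T' \<in> even_subsets (nbrs adj u)" "v \<in> T' \<longleftrightarrow> i" "adj u m'"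
    "\<mu> (Inner u T') = Outer u m' (m' \<in> T)"
    using perfect_matching_inner_rematch[OF cb pm edge(2,4) q T_even] a(2) T by blast
  define \<nu> where "\<nu> = inv_into (Xset U V adj) \<mu>"
  have S: "S \<in> even_subsets (nbrs adj v)"
    using perfect_matching_into_Yset[OF pm, of "Outer v u (\<not> i)"] p edge(3) vu by simp
  have "\<nu> (Outer u v i) = Outer v u i" "\<nu> (Inner v S) = Outer v u (\<not> i)"
    using perfect_matching_inv_eq[OF pm] q p edge(3) vu by (simp_all add: \<nu>_def)
  then obtain S' m where S': "S' \<in> even_subsets (nbrs adj v)" "u \<in> S' \<longleftrightarrow> i" "adj v m"
    "\<nu> (Inner v S') = Outer v m (m \<in> S)"
    using perfect_matching_inner_rematch[OF cubic_bipartite_swap[OF cb] perfect_matching_inv[OF cb pm]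
        edge(3) vu] S unfolding \<nu>_def by blast
  have "\<mu> (Outer v m (m \<in> S)) = Inner v S'"
    using perfect_matching_inv_apply(2)[OF pm, of "Inner v S'"] S'(1,4) edge(3) by (simp add: \<nu>_def)
  then interpret pattern_flip U V adj F f \<mu> u v m m' i S S' T T'
    using cb P edge e i_def p a T T' S' by unfold_locales auto
  show thesis
  proof (rule that)
    have "f(e := \<not> f e) = f({u, v} := \<not> i)"
      using edge(1) by (simp add: i_def)
    then show "matching_with_pattern U V adj F (f(e := \<not> f e)) (\<mu> \<circ> rotation)"
      using pattern_rotated by simp
    show "pm_sgn U V adj \<eta> \<eta>' (\<mu> \<circ> rotation) = pm_sgn U V adj \<eta> \<eta>' \<mu>"
      using pm_sgn_compose_permutes[OF eta eta' _ rotation_permutes] pm sign_rotation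
      by (simp add: perfect_matching_def)
  qed
qed

lemma pm_sgn_eq_if_patterns_on_two_factor:
  assumes cb: "cubic_bipartite U V adj" and tf: "two_factor U V adj F"
    and eta: "bij_betw \<eta> (Xset U V adj) {1..10 * card U}"
    and eta': "bij_betw \<eta>' (Yset U V adj) {1..10 * card U}"
    and P1: "matching_with_pattern U V adj F f \<mu>1" and P2: "matching_with_pattern U V adj F g \<mu>2"
  shows "pm_sgn U V adj \<eta> \<eta>' \<mu>1 = pm_sgn U V adj \<eta> \<eta>' \<mu>2"
proof -
  have "pm_sgn U V adj \<eta> \<eta>' \<mu> = pm_sgn U V adj \<eta> \<eta>' \<mu>2"
    if "finite D" "{e \<in> F. h e \<noteq> g e} \<subseteq> D" "matching_with_pattern U V adj F h \<mu>" for D h \<mu>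
    using that
  proof (induction D arbitrary: h \<mu> rule: finite_induct)
    case empty
    then have "matching_with_pattern U V adj F g \<mu>"
      by (auto intro: matching_with_pattern_cong)
    then show ?case
      by (rule pm_sgn_eq_if_same_pattern[OF cb tf eta eta' P2])
  next
    case (insert e D)
    show ?case
    proof (cases "e \<in> F \<and> h e \<noteq> g e")
      case True
      obtain \<mu>' where "matching_with_pattern U V adj F (h(e := \<not> h e)) \<mu>'"
        "pm_sgn U V adj \<eta> \<eta>' \<mu>' = pm_sgn U V adj \<eta> \<eta>' \<mu>"
        using pm_sgn_flip_pattern[OF cb tf eta eta' insert.prems(2)] True by blast
      moreover have "{e' \<in> F. (h(e := \<not> h e)) e' \<noteq> g e'} \<subseteq> D"
        using insert.prems(1) True by auto
      ultimately show ?thesis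
        using insert.IH by metis
    next
      case False
      then have "{e' \<in> F. h e' \<noteq> g e'} \<subseteq> D"
        using insert.prems(1) by auto
      then show ?thesis
        using insert.IH insert.prems(2) by blast
    qed
  qed
  then show ?thesis
    using two_factor_finite[OF cb tf] P1 by blast
qed

theorem mainTheorem5:
  fixes U V :: "'a set" and adj :: "'a \<Rightarrow> 'a \<Rightarrow> bool"
    and \<eta> \<eta>' :: "'a hv \<Rightarrow> nat" and F :: "'a set set" and f g :: "'a set \<Rightarrow> bool"
    and \<mu>1 \<mu>2 :: "'a hv \<Rightarrow> 'a hv"
  assumes "cubic_bipartite U V adj"
    and "bij_betw \<eta> (Xset U V adj) {1..10 * card U}"
    and "bij_betw \<eta>' (Yset U V adj) {1..10 * card U}"
    and "two_factor U V adj F"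
    and "\<mu>1 \<in> mu_Ff U V adj F f"
    and "\<mu>2 \<in> mu_Ff U V adj F g"
  shows "pm_sgn U V adj \<eta> \<eta>' \<mu>1 = pm_sgn U V adj \<eta> \<eta>' \<mu>2"
  using pm_sgn_eq_if_patterns_on_two_factor[OF assms(1,4,2,3)]
    mu_Ff_imp_matching_with_pattern[OF assms(1,5)] mu_Ff_imp_matching_with_pattern[OF assms(1,6)]
  by blast

end
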